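(* If $0\le\alpha\eta\le1$, then \[ \rho^{\mathrm{dir}}_{\alpha,\eta}\le\sqrt{(1-\alpha\eta)^2-2\alpha(1-\alpha\eta)c_\Phi+\alpha^2L_\Phi^2}, \] and equivalently \[ \rho^{\mathrm{dir}}_{\alpha,\eta}\le\sqrt{1-2\alpha(c_\Phi+\eta)+\alpha^2(L_\Phi^2+2c_\Phi\eta+\eta^2)}. \] Consequently, if $0\le\alpha\eta\le1$, $c_\Phi+\eta>0$, and \[ 0<\alpha<\frac{2(c_\Phi+\eta)}{L_\Phi^2+2c_\Phi\eta+\eta^2}, \] then $\rho^{\mathrm{dir}}_{\alpha,\eta}<1$.
   Context: Consider a finite discounted MDP with state space $\mathcal S=\{1,\dots,|\mathcal S|\}$, action space $\mathcal A=\{1,\dots,|\mathcal A|\}$, transition probabilities $P(s'\mid s,a)$, and discount factor $\gamma\in(0,1)$. State-action vectors are ordered as $(1,1),(2,1),\dots,(|\mathcal S|,1),(1,2),\dots$. The matrix $P\in\mathbb R^{|\mathcal S||\mathcal A|\times|\mathcal S|}$ has rows $P(\cdot\mid s,a)$. The set $\Theta$ is the finite set of deterministic stationary policies $\pi:\mathcal S\to\mathcal A$. For $\pi\in\Theta$, $\Pi^\pi\in\mathbb R^{|\mathcal S|\times|\mathcal S||\mathcal A|}$ has entry $1$ at row $s$, column $(s,\pi(s))$, and zeros elsewhere. The feature matrix $\Phi\in\mathbb R^{|\mathcal S||\mathcal A|\times m}$ has full column rank. The distribution $d>0$ on $\mathcal S\times\mathcal A$ gives $D=\mathrm{diag}(d)$.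 The step size is $\alpha\in(0,1)$ and the regularization weight is $\eta\ge0$. Let $M_\pi:=\Phi^\top D\Phi-\gamma\Phi^\top DP\Pi^\pi\Phi$. Define \[ c_\Phi:=\min_{\pi\in\Theta}\lambda_{\min}\big((M_\pi+M_\pi^\top)/2\big),\qquad L_\Phi:=\max_{\pi\in\Theta}\|M_\pi\|_2. \] For $\pi\in\Theta$, define $A^\eta_\pi:=I-\alpha(M_\pi+\eta I)$, and let $\rho^{\mathrm{dir}}_{\alpha,\eta}$ be the joint spectral radius $\lim_k\max_{\pi_i\in\Theta}\|A^\eta_{\pi_k}\cdots A^\eta_{\pi_1}\|^{1/k}$ of $\{A^\eta_\pi:\pi\in\Theta\}$. *)

theory Defs
  imports "HOL-Analysis.Analysis"
begin

text \<open>State space 's, action space 'act, feature index 'm (all finite types).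
  State-action vectors are indexed by the type ('s \<times> 'act); the particular
  linear ordering of state-action pairs is immaterial.  Matrices are
  HOL-Analysis matrices: real^'col^'row.\<close>

definition policy_mat :: "('s::finite \<Rightarrow> 'act::finite) \<Rightarrow> real^('s \<times> 'act)^'s" where
  "policy_mat \<pi> = (\<chi> s sa. if sa = (s, \<pi> s) then 1 else 0)"

definition diag_mat :: "('n::finite \<Rightarrow> real) \<Rightarrow> real^'n^'n" where
  "diag_mat d = (\<chi> i j. if i = j then d i else 0)"

definition M_pol :: "real \<Rightarrow> real^'s^('s::finite \<times> 'act::finite) \<Rightarrow> real^'m::finite^('s \<times> 'act)
    \<Rightarrow> (('s \<times> 'act) \<Rightarrow> real) \<Rightarrow> ('s \<Rightarrow> 'act) \<Rightarrow> real^'m^'m" where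
  "M_pol \<gamma> P \<Phi> d \<pi> =
     transpose \<Phi> ** diag_mat d ** \<Phi> - \<gamma> *\<^sub>R (transpose \<Phi> ** diag_mat d ** P ** policy_mat \<pi> ** \<Phi>)"

text \<open>Real eigenvalues of a square real matrix, and the smallest one
  (used only for symmetric matrices, whose eigenvalues are all real).\<close>
definition real_eigenvalues :: "real^'n::finite^'n \<Rightarrow> real set" where
  "real_eigenvalues S = {c. \<exists>v. v \<noteq> 0 \<and> S *v v = c *\<^sub>R v}"

definition lambda_min :: "real^'n::finite^'n \<Rightarrow> real" where
  "lambda_min S = Min (real_eigenvalues S)"

definition spec_norm :: "real^'n::finite^'k::finite \<Rightarrow> real" where
  "spec_norm A = onorm (\<lambda>x. A *v x)"

text \<open>c_Phi and L_Phi; Theta = all deterministic policies = UNIV.\<close>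
definition c_Phi :: "real \<Rightarrow> real^'s^('s::finite \<times> 'act::finite) \<Rightarrow> real^'m::finite^('s \<times> 'act)
    \<Rightarrow> (('s \<times> 'act) \<Rightarrow> real) \<Rightarrow> real" where
  "c_Phi \<gamma> P \<Phi> d = Min ((\<lambda>\<pi>. lambda_min ((1/2) *\<^sub>R (M_pol \<gamma> P \<Phi> d \<pi> + transpose (M_pol \<gamma> P \<Phi> d \<pi>))))
                          ` (UNIV :: ('s \<Rightarrow> 'act) set))"

definition L_Phi :: "real \<Rightarrow> real^'s^('s::finite \<times> 'act::finite) \<Rightarrow> real^'m::finite^('s \<times> 'act)
    \<Rightarrow> (('s \<times> 'act) \<Rightarrow> real) \<Rightarrow> real" where
  "L_Phi \<gamma> P \<Phi> d = Max ((\<lambda>\<pi>. spec_norm (M_pol \<gamma> P \<Phi> d \<pi>)) ` (UNIV :: ('s \<Rightarrow> 'act) set))"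

definition A_pol :: "real \<Rightarrow> real \<Rightarrow> real \<Rightarrow> real^'s^('s::finite \<times> 'act::finite) \<Rightarrow> real^'m::finite^('s \<times> 'act)
    \<Rightarrow> (('s \<times> 'act) \<Rightarrow> real) \<Rightarrow> ('s \<Rightarrow> 'act) \<Rightarrow> real^'m^'m" where
  "A_pol \<alpha> \<eta> \<gamma> P \<Phi> d \<pi> = mat 1 - \<alpha> *\<^sub>R (M_pol \<gamma> P \<Phi> d \<pi> + \<eta> *\<^sub>R mat 1)"

text \<open>Product A_{pi_k} ... A_{pi_1} for the list [pi_1, ..., pi_k] (pi_1 applied first).\<close>
definition mat_prod_list :: "(real^'m::finite^'m) list \<Rightarrow> real^'m^'m" where
  "mat_prod_list As = foldl (\<lambda>acc A. A ** acc) (mat 1) As"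

definition jsr_seq :: "(('p::finite) \<Rightarrow> real^'m::finite^'m) \<Rightarrow> nat \<Rightarrow> real" where
  "jsr_seq F k = (Max {spec_norm (mat_prod_list (map F ps)) | ps. length ps = k}) powr (1 / real k)"

definition jsr :: "(('p::finite) \<Rightarrow> real^'m::finite^'m) \<Rightarrow> real" where
  "jsr F = lim (jsr_seq F)"

end

theory Submission
  imports Defs
begin

text \<open>Write \<open>A\<^sub>\<pi> = (1 - \<alpha>\<eta>) I - \<alpha> M\<^sub>\<pi>\<close>. Expanding \<open>\<parallel>A\<^sub>\<pi> x\<parallel>\<^sup>2\<close> and using
  \<open>x\<^sup>T M\<^sub>\<pi> x \<ge> c\<^sub>\<Phi> \<parallel>x\<parallel>\<^sup>2\<close> (the smallest eigenvalue of the symmetric part bounds the quadratic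
  form, by the Rayleigh principle) and \<open>\<parallel>M\<^sub>\<pi> x\<parallel> \<le> L\<^sub>\<Phi> \<parallel>x\<parallel>\<close> bounds every \<open>\<parallel>A\<^sub>\<pi>\<parallel>\<close> by the
  square root \<open>\<rho>\<close> in the claim, as long as \<open>1 - \<alpha>\<eta> \<ge> 0\<close>. By submultiplicativity of the norm,
  every product of \<open>k\<close> factors has norm at most \<open>\<rho>\<^sup>k\<close>, so every term of the sequence defining
  the joint spectral radius is at most \<open>\<rho>\<close>. Since the joint spectral radius is defined as a
  \<open>lim\<close>, the bound passes to it only once the sequence is known to converge; this is Fekete's
  lemma, as the maximal product norms form a submultiplicative sequence.\<close>

lemma submultiplicative_le_power_mult:
  fixes a :: "nat \<Rightarrow> real"
  assumes nonneg: "\<And>k. 0 \<le> a k" and submult: "\<And>m n. a (m + n) \<le> a m * a n"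
  shows "a (q * m + r) \<le> a m ^ q * a r"
proof (induction q)
  case 0
  then show ?case by simp
next
  case (Suc q)
  have "a (Suc q * m + r) = a (m + (q * m + r))" by (simp add: algebra_simps)
  also have "\<dots> \<le> a m * a (q * m + r)" by (rule submult)
  also have "\<dots> \<le> a m * (a m ^ q * a r)" by (rule mult_left_mono[OF Suc nonneg])
  finally show ?case by (simp add: mult.assoc)
qed

lemma submultiplicative_le_geometric:
  fixes a :: "nat \<Rightarrow> real"
  assumes nonneg: "\<And>k. 0 \<le> a k" and submult: "\<And>m n. a (m + n) \<le> a m * a n"
    and "1 \<le> m" "0 < \<beta>" "a m \<le> \<beta> ^ m"
  obtains D where "0 < D" "\<And>k. a k \<le> \<beta> ^ k * D"
proof
  define C where "C = max 1 (Max (a ` {..<m}))"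
  define D where "D = C / min 1 (\<beta> ^ m)"
  have "0 < C" by (simp add: C_def)
  then show "0 < D" using \<open>0 < \<beta>\<close> by (simp add: D_def)
  show "a k \<le> \<beta> ^ k * D" for k
  proof -
    define q r where "q = k div m" and "r = k mod m"
    have "r < m" using \<open>1 \<le> m\<close> by (simp add: r_def)
    have \<beta>_pow_r: "min 1 (\<beta> ^ m) \<le> \<beta> ^ r"
      using \<open>r < m\<close> \<open>0 < \<beta>\<close> by (cases "1 \<le> \<beta>") (auto intro!: min.coboundedI2 power_decreasing)
    have k_eq: "k = q * m + r" by (simp add: q_def r_def)
    have "a k \<le> a m ^ q * a r"
      using submultiplicative_le_power_mult[of a, OF nonneg submult] by (simp add: k_eq)
    also have "\<dots> \<le> (\<beta> ^ m) ^ q * C"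
      using \<open>r < m\<close> \<open>0 < \<beta>\<close> nonneg \<open>a m \<le> \<beta> ^ m\<close>
      by (intro mult_mono power_mono) (auto simp: C_def intro: max.coboundedI2)
    also have "\<dots> = \<beta> ^ k / \<beta> ^ r * C"
      using \<open>0 < \<beta>\<close> unfolding k_eq by (simp add: power_add power_mult mult.commute)
    also have "\<dots> \<le> \<beta> ^ k * D"
      using \<beta>_pow_r \<open>0 < \<beta>\<close> \<open>0 < C\<close>
      by (simp add: D_def divide_simps mult_left_mono)
    finally show ?thesis .
  qed
qed

lemma submultiplicative_root_eventually_less:
  fixes a :: "nat \<Rightarrow> real"
  assumes nonneg: "\<And>k. 0 \<le> a k" and submult: "\<And>m n. a (m + n) \<le> a m * a n"
    and "1 \<le> m" "a m powr (1 / real m) < \<beta>"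
  shows "\<forall>\<^sub>F k in sequentially. a k powr (1 / real k) < \<beta>"
proof -
  define b where "b = a m powr (1 / real m)"
  define \<beta>' where "\<beta>' = (b + \<beta>) / 2"
  have "0 \<le> b" "b < \<beta>"
    using assms(4) by (simp_all add: b_def)
  then have "0 < \<beta>'" "\<beta>' < \<beta>"
    by (simp_all add: \<beta>'_def)
  have "a m = b ^ m"
    using \<open>1 \<le> m\<close> nonneg[of m] by (cases "a m = 0") (auto simp: b_def powr_realpow[symmetric] powr_powr)
  also have "\<dots> \<le> \<beta>' ^ m"
    using \<open>0 \<le> b\<close> \<open>b < \<beta>\<close> by (intro power_mono) (auto simp: \<beta>'_def)
  finally obtain D where "0 < D" and D: "\<And>k. a k \<le> \<beta>' ^ k * D"
    using submultiplicative_le_geometric[of a, OF nonneg submult \<open>1 \<le> m\<close> \<open>0 < \<beta>'\<close>] by blast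
  have root_le: "a k powr (1 / real k) \<le> \<beta>' * D powr (1 / real k)" if "1 \<le> k" for k
  proof -
    have "a k powr (1 / real k) \<le> (\<beta>' ^ k * D) powr (1 / real k)"
      using D[of k] nonneg[of k] by (intro powr_mono2) auto
    also have "\<dots> = \<beta>' * D powr (1 / real k)"
      using that \<open>0 < \<beta>'\<close> \<open>0 < D\<close> by (simp add: powr_mult powr_realpow[symmetric] powr_powr)
    finally show ?thesis .
  qed
  have "(\<lambda>k. \<beta>' * D powr (1 / real k)) \<longlonglongrightarrow> \<beta>' * D powr 0"
    using \<open>0 < D\<close> by (intro tendsto_intros lim_1_over_n) auto
  then have "\<forall>\<^sub>F k in sequentially. \<beta>' * D powr (1 / real k) < \<beta>"
    using \<open>0 < D\<close> \<open>\<beta>' < \<beta>\<close> by (intro order_tendstoD(2)) auto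
  moreover have "\<forall>\<^sub>F k in sequentially. 1 \<le> k"
    by (rule eventually_ge_at_top)
  ultimately show ?thesis
    by eventually_elim (use root_le in fastforce)
qed

lemma fekete_submultiplicative:
  fixes a :: "nat \<Rightarrow> real"
  assumes nonneg: "\<And>k. 0 \<le> a k" and submult: "\<And>m n. a (m + n) \<le> a m * a n"
  shows "(\<lambda>k. a k powr (1 / real k)) \<longlonglongrightarrow> (INF k\<in>{1..}. a k powr (1 / real k))"
proof (rule order_tendstoI)
  let ?b = "\<lambda>k. a k powr (1 / real k)"
  have bdd: "bdd_below (?b ` {1..})"
    by (rule bdd_belowI[where m = 0]) auto
  fix y
  assume "y < (INF k\<in>{1..}. ?b k)"
  then have "y < ?b k" if "1 \<le> k" for k
    using cINF_lower[OF bdd, of k] that by auto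
  then show "\<forall>\<^sub>F k in sequentially. y < ?b k"
    by (auto simp: eventually_sequentially)
next
  fix y
  assume "(INF k\<in>{1..}. a k powr (1 / real k)) < y"
  then obtain m where "1 \<le> m" "a m powr (1 / real m) < y"
    using cInf_lessD[of "(\<lambda>k. a k powr (1 / real k)) ` {1..}" y] by auto
  then show "\<forall>\<^sub>F k in sequentially. a k powr (1 / real k) < y"
    by (rule submultiplicative_root_eventually_less[of a, OF nonneg submult])
qed

lemma spec_norm_nonneg: "0 \<le> spec_norm A"
  unfolding spec_norm_def by (rule onorm_pos_le[OF matrix_vector_mul_bounded_linear])

lemma norm_matrix_vector_mul_le: "norm (A *v x) \<le> spec_norm A * norm x"
  unfolding spec_norm_def by (rule onorm[OF matrix_vector_mul_bounded_linear])

lemma spec_norm_le: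
  assumes "\<And>x. norm (A *v x) \<le> b * norm x"
  shows "spec_norm A \<le> b"
  unfolding spec_norm_def using assms by (rule onorm_le)

lemma spec_norm_mat_1_le: "spec_norm (mat 1 :: real^'n::finite^'n) \<le> 1"
  by (rule spec_norm_le) simp

lemma spec_norm_matrix_mul_le: "spec_norm (A ** B) \<le> spec_norm A * spec_norm B"
proof (rule spec_norm_le)
  fix x
  have "norm ((A ** B) *v x) = norm (A *v (B *v x))"
    by (simp add: matrix_vector_mul_assoc)
  also have "\<dots> \<le> spec_norm A * (spec_norm B * norm x)"
    using norm_matrix_vector_mul_le[of A] norm_matrix_vector_mul_le[of B x] spec_norm_nonneg[of A]
    by (meson mult_left_mono order_trans)
  finally show "norm ((A ** B) *v x) \<le> spec_norm A * spec_norm B * norm x"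
    by (simp add: mult.assoc)
qed

lemma mat_prod_list_Nil: "mat_prod_list [] = mat 1"
  by (simp add: mat_prod_list_def)

lemma mat_prod_list_snoc: "mat_prod_list (As @ [A]) = A ** mat_prod_list As"
  by (simp add: mat_prod_list_def)

lemma mat_prod_list_append: "mat_prod_list (As @ Bs) = mat_prod_list Bs ** mat_prod_list As"
proof (induction Bs rule: rev_induct)
  case Nil
  then show ?case by (simp add: mat_prod_list_Nil)
next
  case (snoc B Bs)
  then show ?case
    by (simp add: mat_prod_list_snoc matrix_mul_assoc flip: append_assoc)
qed

lemma spec_norm_mat_prod_list_le:
  assumes "\<And>A. A \<in> set As \<Longrightarrow> spec_norm A \<le> q"
  shows "spec_norm (mat_prod_list As) \<le> q ^ length As"
  using assms
proof (induction As rule: rev_induct)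
  case Nil
  then show ?case by (simp add: mat_prod_list_Nil spec_norm_mat_1_le)
next
  case (snoc A As)
  have "spec_norm (mat_prod_list (As @ [A])) \<le> spec_norm A * spec_norm (mat_prod_list As)"
    unfolding mat_prod_list_snoc by (rule spec_norm_matrix_mul_le)
  also have "\<dots> \<le> q * q ^ length As"
  proof (rule mult_mono)
    show "spec_norm A \<le> q"
      using snoc.prems by simp
    then show "0 \<le> q"
      using spec_norm_nonneg[of A] by linarith
    show "spec_norm (mat_prod_list As) \<le> q ^ length As"
      using snoc by simp
  qed (rule spec_norm_nonneg)
  finally show ?case by simp
qed

definition max_prod_norm :: "('p::finite \<Rightarrow> real^'m::finite^'m) \<Rightarrow> nat \<Rightarrow> real" where
  "max_prod_norm F k = Max {spec_norm (mat_prod_list (map F ps)) | ps. length ps = k}"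

lemma jsr_seq_eq: "jsr_seq F k = max_prod_norm F k powr (1 / real k)"
  by (simp add: jsr_seq_def max_prod_norm_def)

lemma max_prod_norm_eq_Max_image:
  "max_prod_norm F k = Max ((\<lambda>ps. spec_norm (mat_prod_list (map F ps))) ` {ps. length ps = k})"
  unfolding max_prod_norm_def by (simp add: setcompr_eq_image)

lemma spec_norm_le_max_prod_norm:
  "spec_norm (mat_prod_list (map F ps)) \<le> max_prod_norm F (length ps)"
  unfolding max_prod_norm_eq_Max_image by (simp add: finite_list_length)

lemma max_prod_norm_le_iff:
  "max_prod_norm F k \<le> b \<longleftrightarrow> (\<forall>ps. length ps = k \<longrightarrow> spec_norm (mat_prod_list (map F ps)) \<le> b)"
proof -
  have "{ps. length ps = k} \<noteq> {}"
    by (auto intro: exI[of _ "replicate k undefined"])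
  then show ?thesis
    unfolding max_prod_norm_eq_Max_image by (subst Max_le_iff) (auto simp: finite_list_length)
qed

lemma max_prod_norm_nonneg: "0 \<le> max_prod_norm F k"
  using spec_norm_le_max_prod_norm[of F "replicate k undefined"] spec_norm_nonneg
  by (metis length_replicate order_trans)

lemma max_prod_norm_add_le: "max_prod_norm F (m + n) \<le> max_prod_norm F m * max_prod_norm F n"
  unfolding max_prod_norm_le_iff
proof (intro allI impI)
  fix ps :: "'a list"
  assume "length ps = m + n"
  define xs ys where "xs = take m ps" and "ys = drop m ps"
  have "ps = xs @ ys"
    by (simp add: xs_def ys_def)
  then have "spec_norm (mat_prod_list (map F ps)) = spec_norm (mat_prod_list (map F ys) ** mat_prod_list (map F xs))"
    by (simp add: mat_prod_list_append)
  also have "\<dots> \<le> spec_norm (mat_prod_list (map F ys)) * spec_norm (mat_prod_list (map F xs))"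
    by (rule spec_norm_matrix_mul_le)
  also have "\<dots> \<le> max_prod_norm F n * max_prod_norm F m"
    using \<open>length ps = m + n\<close> spec_norm_le_max_prod_norm[of F xs] spec_norm_le_max_prod_norm[of F ys]
    by (intro mult_mono) (auto simp: xs_def ys_def spec_norm_nonneg max_prod_norm_nonneg)
  finally show "spec_norm (mat_prod_list (map F ps)) \<le> max_prod_norm F m * max_prod_norm F n"
    by (simp add: mult.commute)
qed

lemma jsr_seq_tendsto_jsr: "jsr_seq F \<longlonglongrightarrow> jsr F"
proof -
  have "convergent (jsr_seq F)"
    unfolding convergent_def jsr_seq_eq[abs_def]
    using fekete_submultiplicative[of "max_prod_norm F", OF max_prod_norm_nonneg max_prod_norm_add_le]
    by blast
  then show ?thesis
    unfolding jsr_def by (simp add: convergent_LIMSEQ_iff)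
qed

lemma jsr_le:
  assumes "\<And>p. spec_norm (F p) \<le> q"
  shows "jsr F \<le> q"
proof (rule LIMSEQ_le_const2[OF jsr_seq_tendsto_jsr])
  have "0 \<le> q"
    using assms spec_norm_nonneg order_trans by blast
  have "jsr_seq F k \<le> q" if "1 \<le> k" for k
  proof -
    have "spec_norm (mat_prod_list (map F ps)) \<le> q ^ length ps" for ps
      using spec_norm_mat_prod_list_le[of "map F ps" q] assms by auto
    then have "max_prod_norm F k \<le> q ^ k"
      unfolding max_prod_norm_le_iff by auto
    then have "jsr_seq F k \<le> (q ^ k) powr (1 / real k)"
      unfolding jsr_seq_eq using max_prod_norm_nonneg by (intro powr_mono2) auto
    also have "\<dots> = q"
      using that \<open>0 \<le> q\<close> by (cases "q = 0") (auto simp: powr_realpow[symmetric] powr_powr)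
    finally show ?thesis .
  qed
  then show "\<exists>N. \<forall>k\<ge>N. jsr_seq F k \<le> q"
    by blast
qed

lemma transpose_add: "transpose (A + B) = transpose A + transpose B"
  by (simp add: transpose_def vec_eq_iff)

lemma transpose_diff: "transpose (A - B) = transpose A - transpose B"
  by (simp add: transpose_def vec_eq_iff)

lemma inner_matrix_vector_mul_transpose:
  fixes A :: "real^'n::finite^'m::finite"
  shows "x \<bullet> (A *v y) = (transpose A *v x) \<bullet> y"
  by (simp add: dot_lmul_matrix)

text \<open>Moving from \<open>x\<close> to \<open>x - s T x\<close> lowers the form by \<open>2 s \<parallel>T x\<parallel>\<^sup>2\<close> to first order in \<open>s\<close>.\<close>

lemma psd_quadratic_form_eq_0_imp_kernel:
  fixes T :: "real^'n::finite^'n"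
  assumes sym: "transpose T = T" and psd: "\<And>y. 0 \<le> y \<bullet> (T *v y)"
    and "x \<bullet> (T *v x) = 0"
  shows "T *v x = 0"
proof -
  define w where "w = T *v x"
  have cross: "x \<bullet> (T *v w) = w \<bullet> w" "w \<bullet> (T *v x) = w \<bullet> w"
    using inner_matrix_vector_mul_transpose[of x T w] sym by (simp_all add: w_def)
  have expand: "(x - s *\<^sub>R w) \<bullet> (T *v (x - s *\<^sub>R w)) = s\<^sup>2 * (w \<bullet> (T *v w)) - 2 * s * (w \<bullet> w)" for s
    using \<open>x \<bullet> (T *v x) = 0\<close> cross
    by (simp add: power2_eq_square algebra_simps)
  have "w \<bullet> w \<le> 0"
  proof (rule ccontr)
    assume "\<not> w \<bullet> w \<le> 0"
    define b where "b = w \<bullet> (T *v w)"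
    define s where "s = (w \<bullet> w) / (b + 1)"
    have "0 \<le> b"
      using psd by (simp add: b_def)
    then have "0 < s" "s * b < w \<bullet> w"
      using \<open>\<not> w \<bullet> w \<le> 0\<close> by (auto simp: s_def field_simps)
    moreover have "2 * s * (w \<bullet> w) \<le> s\<^sup>2 * b"
      using psd[of "x - s *\<^sub>R w"] by (simp add: expand b_def)
    ultimately show False
      using \<open>\<not> w \<bullet> w \<le> 0\<close> by (auto simp: power2_eq_square)
  qed
  then show ?thesis
    by (metis inner_eq_zero_iff inner_ge_zero order_antisym w_def)
qed

lemma symmetric_real_eigenvalue_le_quadratic_form:
  fixes S :: "real^'n::finite^'n"
  assumes sym: "transpose S = S"
  obtains r where "r \<in> real_eigenvalues S" "\<And>x. r * (x \<bullet> x) \<le> x \<bullet> (S *v x)"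
proof -
  have "continuous_on (sphere 0 1) (\<lambda>x. x \<bullet> (S *v x))"
    by (intro continuous_intros linear_continuous_on bounded_linear.linear
        matrix_vector_mul_bounded_linear)
  then obtain x0 :: "real^'n" where "norm x0 = 1"
    and min: "\<And>y. norm y = 1 \<Longrightarrow> x0 \<bullet> (S *v x0) \<le> y \<bullet> (S *v y)"
    using continuous_attains_inf[OF compact_sphere, of 0 1] by fastforce
  define r where "r = x0 \<bullet> (S *v x0)"
  have r_le: "r * (y \<bullet> y) \<le> y \<bullet> (S *v y)" for y
  proof (cases "y = 0")
    case False
    have "r \<le> (y /\<^sub>R norm y) \<bullet> (S *v (y /\<^sub>R norm y))"
      unfolding r_def using False by (intro min) simp
    also have "\<dots> = (y \<bullet> (S *v y)) / (y \<bullet> y)"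
      using False
      by (simp add: matrix_vector_mult_scaleR power2_norm_eq_inner[symmetric] power2_eq_square field_simps)
    finally show ?thesis
      using False by (simp add: field_simps)
  qed simp
  define T where "T = S - r *\<^sub>R mat 1"
  have T_apply: "T *v y = S *v y - r *\<^sub>R y" for y
    by (simp add: T_def matrix_vector_mult_diff_rdistrib scaleR_matrix_vector_assoc[symmetric])
  have "T *v x0 = 0"
  proof (rule psd_quadratic_form_eq_0_imp_kernel)
    show "transpose T = T"
      using sym by (simp add: T_def transpose_diff transpose_scalar)
    show "0 \<le> y \<bullet> (T *v y)" for y
      using r_le[of y] by (simp add: T_apply inner_diff_right)
    show "x0 \<bullet> (T *v x0) = 0"
      using \<open>norm x0 = 1\<close> by (simp add: T_apply inner_diff_right r_def power2_norm_eq_inner[symmetric])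
  qed
  then have "r \<in> real_eigenvalues S"
    using \<open>norm x0 = 1\<close> unfolding real_eigenvalues_def
    by (intro CollectI exI[of _ x0]) (auto simp: T_apply)
  then show ?thesis
    using r_le that by blast
qed

lemma finite_real_eigenvalues_symmetric:
  fixes S :: "real^'n::finite^'n"
  assumes sym: "transpose S = S"
  shows "finite (real_eigenvalues S)"
proof -
  have "\<forall>c\<in>real_eigenvalues S. \<exists>u. u \<noteq> 0 \<and> S *v u = c *\<^sub>R u"
    unfolding real_eigenvalues_def by blast
  from bchoice[OF this] obtain v
    where v: "\<And>c. c \<in> real_eigenvalues S \<Longrightarrow> v c \<noteq> 0 \<and> S *v v c = c *\<^sub>R v c"
    by blast
  have orth: "v c \<bullet> v c' = 0"
    if "c \<in> real_eigenvalues S" "c' \<in> real_eigenvalues S" "c \<noteq> c'" for c c'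
  proof -
    have "c * (v c \<bullet> v c') = (S *v v c) \<bullet> v c'"
      using v[OF that(1)] by simp
    also have "\<dots> = v c \<bullet> (S *v v c')"
      using inner_matrix_vector_mul_transpose[of "v c" S "v c'"] sym by simp
    also have "\<dots> = c' * (v c \<bullet> v c')"
      using v[OF that(2)] by simp
    finally show ?thesis
      using that(3) by simp
  qed
  have "inj_on v (real_eigenvalues S)"
  proof (rule inj_onI)
    fix c c'
    assume "c \<in> real_eigenvalues S" "c' \<in> real_eigenvalues S" "v c = v c'"
    then show "c = c'"
      using orth[of c c'] v[of c] by auto
  qed
  moreover have "independent (v ` real_eigenvalues S)"
    using orth v by (intro pairwise_orthogonal_independent) (auto simp: pairwise_def orthogonal_def)
  then have "finite (v ` real_eigenvalues S)"
    using independent_bound by blast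
  ultimately show ?thesis
    using finite_imageD by blast
qed

lemma lambda_min_mult_inner_le:
  fixes S :: "real^'n::finite^'n"
  assumes "transpose S = S"
  shows "lambda_min S * (x \<bullet> x) \<le> x \<bullet> (S *v x)"
proof -
  obtain r where "r \<in> real_eigenvalues S" and r_le: "r * (x \<bullet> x) \<le> x \<bullet> (S *v x)"
    using symmetric_real_eigenvalue_le_quadratic_form[OF assms] by metis
  have "lambda_min S \<le> r"
    unfolding lambda_min_def
    by (rule Min_le[OF finite_real_eigenvalues_symmetric[OF assms] \<open>r \<in> real_eigenvalues S\<close>])
  then show ?thesis
    using r_le by (meson inner_ge_zero mult_right_mono order_trans)
qed

lemma transpose_symmetric_part:
  "transpose ((1/2) *\<^sub>R (M + transpose M)) = (1/2) *\<^sub>R (M + transpose M)"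
  by (simp add: transpose_scalar transpose_add add.commute)

lemma inner_symmetric_part:
  fixes M :: "real^'n::finite^'n"
  shows "x \<bullet> ((1/2) *\<^sub>R (M + transpose M) *v x) = x \<bullet> (M *v x)"
  using inner_matrix_vector_mul_transpose[of x "transpose M" x]
  by (simp add: scaleR_matrix_vector_assoc[symmetric] matrix_vector_mult_add_rdistrib
      inner_add_right inner_commute)

lemma spec_norm_scaled_id_minus_le:
  fixes M :: "real^'n::finite^'n"
  assumes coercive: "\<And>x. c * (x \<bullet> x) \<le> x \<bullet> (M *v x)"
    and bounded: "spec_norm M \<le> L" and "0 \<le> t" "0 \<le> \<alpha>"
  shows "spec_norm (t *\<^sub>R mat 1 - \<alpha> *\<^sub>R M) \<le> sqrt (t\<^sup>2 - 2 * \<alpha> * t * c + \<alpha>\<^sup>2 * L\<^sup>2)"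
proof (rule spec_norm_le)
  fix x
  have "norm (M *v x) \<le> L * norm x"
    using norm_matrix_vector_mul_le[of M x] bounded by (meson mult_right_mono norm_ge_zero order_trans)
  then have M_sq: "(norm (M *v x))\<^sup>2 \<le> L\<^sup>2 * (x \<bullet> x)"
    by (metis norm_ge_zero power_mono power_mult_distrib power2_norm_eq_inner)
  have apply_eq: "(t *\<^sub>R mat 1 - \<alpha> *\<^sub>R M) *v x = t *\<^sub>R x - \<alpha> *\<^sub>R (M *v x)"
    by (simp add: matrix_vector_mult_diff_rdistrib scaleR_matrix_vector_assoc[symmetric])
  have "(norm ((t *\<^sub>R mat 1 - \<alpha> *\<^sub>R M) *v x))\<^sup>2
      = t\<^sup>2 * (x \<bullet> x) - 2 * \<alpha> * t * (x \<bullet> (M *v x)) + \<alpha>\<^sup>2 * (norm (M *v x))\<^sup>2"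
    unfolding apply_eq power2_norm_eq_inner
    by (simp add: power2_eq_square algebra_simps inner_commute)
  also have "\<dots> \<le> t\<^sup>2 * (x \<bullet> x) - 2 * \<alpha> * t * (c * (x \<bullet> x)) + \<alpha>\<^sup>2 * (L\<^sup>2 * (x \<bullet> x))"
    using coercive[of x] M_sq \<open>0 \<le> t\<close> \<open>0 \<le> \<alpha>\<close>
    by (intro add_mono diff_mono mult_left_mono) auto
  also have "\<dots> = (t\<^sup>2 - 2 * \<alpha> * t * c + \<alpha>\<^sup>2 * L\<^sup>2) * (norm x)\<^sup>2"
    by (simp add: power2_norm_eq_inner algebra_simps)
  finally have "norm ((t *\<^sub>R mat 1 - \<alpha> *\<^sub>R M) *v x) \<le> sqrt ((t\<^sup>2 - 2 * \<alpha> * t * c + \<alpha>\<^sup>2 * L\<^sup>2) * (norm x)\<^sup>2)"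
    by (rule real_le_rsqrt)
  then show "norm ((t *\<^sub>R mat 1 - \<alpha> *\<^sub>R M) *v x) \<le> sqrt (t\<^sup>2 - 2 * \<alpha> * t * c + \<alpha>\<^sup>2 * L\<^sup>2) * norm x"
    by (simp add: real_sqrt_mult)
qed

lemma A_pol_eq: "A_pol \<alpha> \<eta> \<gamma> P \<Phi> d \<pi> = (1 - \<alpha> * \<eta>) *\<^sub>R mat 1 - \<alpha> *\<^sub>R M_pol \<gamma> P \<Phi> d \<pi>"
  by (simp add: A_pol_def scaleR_add_right scaleR_diff_left)

lemma c_Phi_mult_inner_le: "c_Phi \<gamma> P \<Phi> d * (x \<bullet> x) \<le> x \<bullet> (M_pol \<gamma> P \<Phi> d \<pi> *v x)"
proof -
  let ?M = "M_pol \<gamma> P \<Phi> d \<pi>"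
  let ?S = "(1/2) *\<^sub>R (?M + transpose ?M)"
  have "c_Phi \<gamma> P \<Phi> d \<le> lambda_min ?S"
    unfolding c_Phi_def by (rule Min_le) auto
  then have "c_Phi \<gamma> P \<Phi> d * (x \<bullet> x) \<le> lambda_min ?S * (x \<bullet> x)"
    by (intro mult_right_mono) auto
  also have "\<dots> \<le> x \<bullet> (?S *v x)"
    by (rule lambda_min_mult_inner_le[OF transpose_symmetric_part])
  also have "\<dots> = x \<bullet> (?M *v x)"
    by (rule inner_symmetric_part)
  finally show ?thesis .
qed

lemma spec_norm_M_pol_le_L_Phi: "spec_norm (M_pol \<gamma> P \<Phi> d \<pi>) \<le> L_Phi \<gamma> P \<Phi> d"
  unfolding L_Phi_def by (rule Max_ge) auto

lemma jsr_A_pol_le: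
  assumes "0 \<le> \<alpha>" "\<alpha> * \<eta> \<le> 1"
  shows "jsr (A_pol \<alpha> \<eta> \<gamma> P \<Phi> d)
    \<le> sqrt ((1 - \<alpha> * \<eta>)\<^sup>2 - 2 * \<alpha> * (1 - \<alpha> * \<eta>) * c_Phi \<gamma> P \<Phi> d + \<alpha>\<^sup>2 * (L_Phi \<gamma> P \<Phi> d)\<^sup>2)"
proof (rule jsr_le)
  fix \<pi>
  show "spec_norm (A_pol \<alpha> \<eta> \<gamma> P \<Phi> d \<pi>)
    \<le> sqrt ((1 - \<alpha> * \<eta>)\<^sup>2 - 2 * \<alpha> * (1 - \<alpha> * \<eta>) * c_Phi \<gamma> P \<Phi> d + \<alpha>\<^sup>2 * (L_Phi \<gamma> P \<Phi> d)\<^sup>2)"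
    unfolding A_pol_eq using assms
    by (intro spec_norm_scaled_id_minus_le[OF c_Phi_mult_inner_le spec_norm_M_pol_le_L_Phi]) auto
qed

lemma quadratic_less_one:
  fixes \<alpha> b D :: real
  assumes "0 < \<alpha>" "0 < b" "\<alpha> < 2 * b / D"
  shows "1 - 2 * \<alpha> * b + \<alpha>\<^sup>2 * D < 1"
proof -
  have "0 < D"
  proof (rule ccontr)
    assume "\<not> 0 < D"
    then have "2 * b / D \<le> 0"
      using \<open>0 < b\<close> by (simp add: divide_nonneg_nonpos)
    then show False
      using assms by linarith
  qed
  then have "\<alpha> * D < 2 * b"
    using assms(3) by (simp add: field_simps)
  then show ?thesis
    using \<open>0 < \<alpha>\<close> by (simp add: power2_eq_square)
qed

theorem proposition6:
  fixes P :: "real^'s^('s::finite \<times> 'act::finite)"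
    and \<Phi> :: "real^'m::finite^('s \<times> 'act)"
    and d :: "('s \<times> 'act) \<Rightarrow> real"
    and \<gamma> \<alpha> \<eta> :: real
  assumes gamma: "0 < \<gamma>" "\<gamma> < 1"
    and P_nonneg: "\<forall>sa s'. 0 \<le> P $ sa $ s'"
    and P_stoch: "\<forall>sa. (\<Sum>s'\<in>UNIV. P $ sa $ s') = 1"
    and Phi_rank: "rank \<Phi> = CARD('m)"
    and d_pos: "\<forall>sa. 0 < d sa"
    and d_sum: "(\<Sum>sa\<in>UNIV. d sa) = 1"
    and alpha: "0 < \<alpha>" "\<alpha> < 1"
    and eta: "0 \<le> \<eta>"
    and alpha_eta: "0 \<le> \<alpha> * \<eta>" "\<alpha> * \<eta> \<le> 1"
  shows "jsr (A_pol \<alpha> \<eta> \<gamma> P \<Phi> d)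
           \<le> sqrt ((1 - \<alpha> * \<eta>)\<^sup>2 - 2 * \<alpha> * (1 - \<alpha> * \<eta>) * c_Phi \<gamma> P \<Phi> d
                   + \<alpha>\<^sup>2 * (L_Phi \<gamma> P \<Phi> d)\<^sup>2)
       \<and> jsr (A_pol \<alpha> \<eta> \<gamma> P \<Phi> d)
           \<le> sqrt (1 - 2 * \<alpha> * (c_Phi \<gamma> P \<Phi> d + \<eta>)
                   + \<alpha>\<^sup>2 * ((L_Phi \<gamma> P \<Phi> d)\<^sup>2 + 2 * c_Phi \<gamma> P \<Phi> d * \<eta> + \<eta>\<^sup>2))
       \<and> ((c_Phi \<gamma> P \<Phi> d + \<eta> > 0
            \<and> \<alpha> < 2 * (c_Phi \<gamma> P \<Phi> d + \<eta>)
                    / ((L_Phi \<gamma> P \<Phi> d)\<^sup>2 + 2 * c_Phi \<gamma> P \<Phi> d * \<eta> + \<eta>\<^sup>2))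
           \<longrightarrow> jsr (A_pol \<alpha> \<eta> \<gamma> P \<Phi> d) < 1)"
proof -
  let ?c = "c_Phi \<gamma> P \<Phi> d" and ?L = "L_Phi \<gamma> P \<Phi> d" and ?A = "A_pol \<alpha> \<eta> \<gamma> P \<Phi> d"
  have bound: "jsr ?A \<le> sqrt ((1 - \<alpha> * \<eta>)\<^sup>2 - 2 * \<alpha> * (1 - \<alpha> * \<eta>) * ?c + \<alpha>\<^sup>2 * ?L\<^sup>2)"
    using alpha alpha_eta by (intro jsr_A_pol_le) auto
  have radicand_eq: "(1 - \<alpha> * \<eta>)\<^sup>2 - 2 * \<alpha> * (1 - \<alpha> * \<eta>) * ?c + \<alpha>\<^sup>2 * ?L\<^sup>2
      = 1 - 2 * \<alpha> * (?c + \<eta>) + \<alpha>\<^sup>2 * (?L\<^sup>2 + 2 * ?c * \<eta> + \<eta>\<^sup>2)"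
    by (simp add: power2_eq_square algebra_simps)
  have "jsr ?A < 1"
    if "?c + \<eta> > 0" "\<alpha> < 2 * (?c + \<eta>) / (?L\<^sup>2 + 2 * ?c * \<eta> + \<eta>\<^sup>2)"
  proof -
    have "1 - 2 * \<alpha> * (?c + \<eta>) + \<alpha>\<^sup>2 * (?L\<^sup>2 + 2 * ?c * \<eta> + \<eta>\<^sup>2) < 1"
      using alpha that by (intro quadratic_less_one) auto
    then show ?thesis
      using bound radicand_eq by (metis order_le_less_trans real_sqrt_lt_1_iff)
  qed
  then show ?thesis
    using bound radicand_eq by auto
qed

end
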